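(* If $f(z)=z+\sum_{n=2}^\infty a_nz^n\in\mathcal{S}^*_{nc}$, then $$|H_2(2)(f)|=|a_2a_4-a_3^2|\le\tfrac14.$$ The bound is sharp.
   Context: $\mathbb{D}$ is the open unit disk. $\mathcal{A}$ is the class of analytic $f$ on $\mathbb{D}$ with $f(0)=0$, $f'(0)=1$. For analytic $f,g$ on $\mathbb{D}$, $f\prec g$ means $f=g\circ\omega$ for some analytic $\omega:\mathbb{D}\to\mathbb{D}$ with $\omega(0)=0$. $\mathcal{S}^*_{nc}=\{f\in\mathcal{A}: zf'(z)/f(z)\prec (1+z)/\cos z\}$. *)

theory Defs
  imports "HOL-Complex_Analysis.Complex_Analysis"
begin

definition subordinate :: "(complex \<Rightarrow> complex) \<Rightarrow> (complex \<Rightarrow> complex) \<Rightarrow> bool" where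
  "subordinate f g \<longleftrightarrow>
     (\<exists>w. w holomorphic_on ball 0 1 \<and> w 0 = 0 \<and> w ` ball 0 1 \<subseteq> ball 0 1 \<and>
          (\<forall>z\<in>ball 0 1. f z = g (w z)))"

definition classA :: "(complex \<Rightarrow> complex) \<Rightarrow> bool" where
  "classA f \<longleftrightarrow> f holomorphic_on ball 0 1 \<and> f 0 = 0 \<and> deriv f 0 = 1"

text \<open>z f'(z)/f(z), with its removable singularity at 0 filled in by the value f'(0) = 1.\<close>
definition starlike_quot :: "(complex \<Rightarrow> complex) \<Rightarrow> complex \<Rightarrow> complex" where
  "starlike_quot f z = (if z = 0 then 1 else z * deriv f z / f z)"

definition Snc :: "(complex \<Rightarrow> complex) \<Rightarrow> bool" where
  "Snc f \<longleftrightarrow> classA f \<and> (\<forall>z\<in>ball 0 1 - {0}. f z \<noteq> 0) \<and>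
     subordinate (starlike_quot f) (\<lambda>z. (1 + z) / cos z)"

definition coeff :: "(complex \<Rightarrow> complex) \<Rightarrow> nat \<Rightarrow> complex" where
  "coeff f n = (deriv ^^ n) f 0 / fact n"

end

theory Submission
  imports Defs
begin

(* Write z f'/f = (1 + w)/cos w with a Schwarz function w(z) = c1 z + c2 z^2 + c3 z^3 + ...
   Comparing coefficients in cos(w) z f' = f (1 + w) gives a2 = c1, a3 = c2/2 + 3/4 c1^2 and
   a4 = c3/3 + 5/6 c1 c2 + 7/12 c1^3, hence
   a2 a4 - a3^2 = c1 c3/3 + c1^2 c2/12 + c1^4/48 - c2^2/4.
   Since |w| < 1, integrating over circles gives |c1|^2 + |c2|^2 + |c3|^2 <= 1, under which the
   right-hand side has modulus at most 1/4. Equality holds for w(z) = z^2 (c2 = 1). *)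

lemma coeff_eq_fps_nth:
  assumes "f has_fps_expansion F"
  shows "coeff f n = F $ n"
  using fps_nth_fps_expansion[OF assms] by (simp add: coeff_def)

lemma coeff_polynomial:
  "coeff (\<lambda>z. \<Sum>k\<le>n. a k * z ^ k) m = (if m \<le> n then a m else 0)"
proof -
  have "(\<lambda>z. \<Sum>k\<le>n. a k * z ^ k) has_fps_expansion (\<Sum>k\<le>n. fps_const (a k) * fps_X ^ k)"
    by (intro has_fps_expansion_sum has_fps_expansion_mult has_fps_expansion_const
        has_fps_expansion_fps_X_power)
  then have "coeff (\<lambda>z. \<Sum>k\<le>n. a k * z ^ k) m = (\<Sum>k\<le>n. a k * (if m = k then 1 else 0))"
    by (simp add: coeff_eq_fps_nth fps_sum_nth)
  also have "\<dots> = (\<Sum>k\<le>n. if m = k then a k else 0)"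
    by (intro sum.cong) auto
  finally show ?thesis by simp
qed

lemma coeff_has_integral_circlepath:
  assumes holo: "f holomorphic_on ball 0 R" and r: "0 < r" "r < R"
  shows "((\<lambda>t. f (circlepath 0 r t) / circlepath 0 r t ^ k) has_integral coeff f k) {0..1}"
proof -
  let ?g = "circlepath 0 r"
  have sub: "cball 0 r \<subseteq> ball (0::complex) R" using r by auto
  have "continuous_on (cball 0 r) f"
    by (rule holomorphic_on_imp_continuous_on[OF holomorphic_on_subset[OF holo sub]])
  moreover have "f holomorphic_on ball 0 r"
    by (rule holomorphic_on_subset[OF holo]) (use r in auto)
  ultimately
  have "((\<lambda>u. f u / (u - 0) ^ Suc k) has_contour_integral (2*pi*\<i> * coeff f k)) ?g"
    using Cauchy_has_contour_integral_higher_derivative_circlepath[of 0 r f 0 k] r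
    by (simp add: coeff_def)
  then have "((\<lambda>t. f (?g t) / ?g t ^ Suc k * vector_derivative ?g (at t within {0..1}))
               has_integral (2*pi*\<i> * coeff f k)) {0..1}"
    by (simp add: has_contour_integral_def)
  moreover have "f (?g t) / ?g t ^ Suc k * vector_derivative ?g (at t within {0..1})
                   = 2*pi*\<i> * (f (?g t) / ?g t ^ k)" if "t \<in> {0..1}" for t
  proof -
    have "?g t \<noteq> 0" using r by (simp add: circlepath)
    moreover have "vector_derivative ?g (at t within {0..1}) = 2*pi*\<i> * ?g t"
      using that vector_derivative_circlepath01[of t 0 r] by (simp add: circlepath[of 0 r])
    ultimately show ?thesis by (simp add: field_simps)
  qed
  ultimately have "((\<lambda>t. 2*pi*\<i> * (f (?g t) / ?g t ^ k)) has_integral (2*pi*\<i> * coeff f k)) {0..1}"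
    using has_integral_cong by (metis (no_types, lifting))
  then show ?thesis
    by (subst (asm) has_integral_mult_right_iff) auto
qed

lemma two_Re_mult_cnj_le: "2 * Re (u * cnj p) \<le> (norm u)\<^sup>2 + (norm p)\<^sup>2"
proof -
  have "0 \<le> (Re u - Re p)\<^sup>2 + (Im u - Im p)\<^sup>2" by simp
  moreover have "(norm u)\<^sup>2 + (norm p)\<^sup>2 = (Re u)\<^sup>2 + (Im u)\<^sup>2 + (Re p)\<^sup>2 + (Im p)\<^sup>2"
    by (simp add: cmod_power2)
  ultimately show ?thesis by (simp add: power2_eq_square algebra_simps)
qed

lemma has_integral_circlepath_mult_cnj_polynomial:
  assumes holo: "f holomorphic_on ball 0 R" and r: "0 < r" "r < R"
  shows "((\<lambda>t. f (circlepath 0 r t) * cnj (\<Sum>k\<le>n. a k * circlepath 0 r t ^ k))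
           has_integral (\<Sum>k\<le>n. cnj (a k) * r ^ (2*k) * coeff f k)) {0..1}"
proof -
  let ?g = "circlepath 0 r"
  have "cnj (?g t) ^ k = r ^ (2*k) / ?g t ^ k" for t k
  proof -
    have "norm (?g t) = r"
      using r by (simp add: circlepath norm_mult)
    then have "cnj (?g t) = r\<^sup>2 / ?g t"
      using complex_norm_square[of "?g t"] r by (simp add: field_simps)
    then show ?thesis
      by (simp add: power_divide power_mult)
  qed
  then have "f (?g t) * cnj (\<Sum>k\<le>n. a k * ?g t ^ k)
               = (\<Sum>k\<le>n. cnj (a k) * r ^ (2*k) * (f (?g t) / ?g t ^ k))" for t
    by (simp add: sum_distrib_left mult_ac)
  moreover have "((\<lambda>t. \<Sum>k\<le>n. cnj (a k) * r ^ (2*k) * (f (?g t) / ?g t ^ k))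
                   has_integral (\<Sum>k\<le>n. cnj (a k) * r ^ (2*k) * coeff f k)) {0..1}"
    by (intro has_integral_sum has_integral_mult_right coeff_has_integral_circlepath[OF holo r]) auto
  ultimately show ?thesis
    by simp
qed

lemma coeff_square_sum_circle_le:
  assumes holo: "w holomorphic_on ball 0 1" and bound: "\<And>z. z \<in> ball 0 1 \<Longrightarrow> norm (w z) \<le> M"
    and r: "0 < r" "r < 1"
  shows "(\<Sum>k\<le>n. (norm (coeff w k))\<^sup>2 * r ^ (2*k)) \<le> M\<^sup>2"
proof -
  define a where "a = coeff w"
  define P where "P = (\<lambda>z. \<Sum>k\<le>n. a k * z ^ k)"
  define S where "S = (\<Sum>k\<le>n. (norm (a k))\<^sup>2 * r ^ (2*k))"
  let ?g = "circlepath 0 r"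
  have "cnj (a k) * r ^ (2*k) * a k = of_real ((norm (a k))\<^sup>2 * r ^ (2*k))" for k
  proof -
    have "cnj (a k) * r ^ (2*k) * a k = (a k * cnj (a k)) * r ^ (2*k)"
      by (simp only: ac_simps)
    then show ?thesis
      by (simp only: complex_norm_square[symmetric] of_real_mult)
  qed
  then have S_eq: "(\<Sum>k\<le>n. cnj (a k) * r ^ (2*k) * a k) = of_real S"
    by (simp only: S_def of_real_sum)
  have integral_w: "((\<lambda>t. w (?g t) * cnj (P (?g t))) has_integral of_real S) {0..1}"
    using has_integral_circlepath_mult_cnj_polynomial[OF holo r, where a = a and n = n]
    unfolding P_def a_def[symmetric] S_eq .
  have "(\<Sum>k\<le>n. cnj (a k) * r ^ (2*k) * coeff P k) = of_real S"
    unfolding S_eq[symmetric] by (intro sum.cong) (simp_all add: P_def coeff_polynomial)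
  moreover have "P holomorphic_on ball 0 1"
    unfolding P_def by (intro holomorphic_intros)
  ultimately have integral_P: "((\<lambda>t. P (?g t) * cnj (P (?g t))) has_integral of_real S) {0..1}"
    using has_integral_circlepath_mult_cnj_polynomial[OF _ r, where f = P and a = a and n = n] by (simp add: P_def)
  (* Integrating 2 Re (w cnj P) <= |w|^2 + |P|^2 <= M^2 + |P|^2 over the circle, where both
     w cnj P and |P|^2 integrate to S, yields 2 S <= M^2 + S. *)
  have "2 * Re (w (?g t) * cnj (P (?g t))) \<le> M\<^sup>2 + Re (P (?g t) * cnj (P (?g t)))" for t
  proof -
    have "norm (w (?g t)) \<le> M"
      using bound[of "?g t"] r by (simp add: circlepath norm_mult)
    then have "(norm (w (?g t)))\<^sup>2 \<le> M\<^sup>2"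
      by (simp add: power_mono)
    then show ?thesis
      using two_Re_mult_cnj_le[of "w (?g t)" "P (?g t)"]
      by (simp only: cmod_power2 complex_mult_cnj Re_complex_of_real)
  qed
  then have "2 * S \<le> M\<^sup>2 + S"
    using has_integral_le[OF has_integral_mult_right[OF has_integral_Re[OF integral_w], of 2]
        has_integral_add[OF has_integral_const_real[of "M\<^sup>2" 0 1] has_integral_Re[OF integral_P]]]
    by simp
  then show ?thesis
    by (simp add: S_def a_def)
qed

lemma coeff_square_sum_le:
  assumes "w holomorphic_on ball 0 1" and "\<And>z. z \<in> ball 0 1 \<Longrightarrow> norm (w z) \<le> M"
  shows "(\<Sum>k\<le>n. (norm (coeff w k))\<^sup>2) \<le> M\<^sup>2"
proof -
  let ?S = "\<lambda>r::real. \<Sum>k\<le>n. (norm (coeff w k))\<^sup>2 * r ^ (2*k)"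
  have "(?S \<longlongrightarrow> ?S 1) (at_left 1)"
    by (intro tendsto_intros)
  moreover have "eventually (\<lambda>r. r \<in> {0<..<1}) (at_left (1::real))"
    by (rule eventually_at_left_real) simp
  then have "eventually (\<lambda>r. ?S r \<le> M\<^sup>2) (at_left (1::real))"
    by (rule eventually_mono) (use coeff_square_sum_circle_le[OF assms] in auto)
  ultimately have "?S 1 \<le> M\<^sup>2"
    by (intro tendsto_upperbound) auto
  then show ?thesis by simp
qed

lemma cos_nonzero_on_unit_ball: "(z::complex) \<in> ball 0 1 \<Longrightarrow> cos z \<noteq> 0"
  using cos_eq_zero_imp_norm_ge[of z] pi_gt3 by auto

lemma fps_power_nth_less:
  fixes W :: "'a::comm_semiring_1 fps"
  assumes "W $ 0 = 0" and "n < i"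
  shows "(W ^ i) $ n = 0"
proof (cases "W = 0")
  case False
  with assms(1) have "1 \<le> subdegree W"
    using subdegree_eq_0_iff[of W] by linarith
  with assms(2) show ?thesis
    by (intro fps_pow_nth_below_subdegree) (simp add: less_le_trans)
qed (use assms(2) in \<open>simp add: power_0_left\<close>)

lemma cos_subordination_fps_coeffs:
  fixes A W :: "complex fps"
  assumes eq: "(fps_cos 1 oo W) * (fps_X * fps_deriv A) = A * (1 + W)"
    and A0: "A $ 0 = 0" and A1: "A $ 1 = 1" and W0: "W $ 0 = 0"
  shows "A $ 2 = W $ 1"
    and "A $ 3 = W $ 2 / 2 + 3/4 * (W $ 1)\<^sup>2"
    and "A $ 4 = W $ 3 / 3 + 5/6 * W $ 1 * W $ 2 + 7/12 * (W $ 1) ^ 3"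
proof -
  have cos2: "fps_cos 1 $ 2 = (-1/2 :: complex)"
    using fps_cos_nth_add_2[of "1::complex" 0] by (simp add: numeral_2_eq_2)
  have cos3: "fps_cos 1 $ 3 = (0 :: complex)"
    using fps_cos_nth_add_2[of "1::complex" 1] by (simp add: numeral_3_eq_3)
  have nth_eq: "((fps_cos 1 oo W) * (fps_X * fps_deriv A)) $ n = (A * (1 + W)) $ n" for n
    using eq by simp
  note simps = fps_mult_nth fps_compose_nth eval_nat_numeral fps_power_nth_less[OF W0]
  show A2: "A $ 2 = W $ 1"
    using nth_eq[of 2] A0 A1 W0 by (simp add: simps)
  have "2 * A $ 3 - W $ 1 * W $ 1 / 2 = W $ 2 + A $ 2 * W $ 1"
    using nth_eq[of 3] A0 A1 W0 cos2 by (simp add: simps)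
  then show A3: "A $ 3 = W $ 2 / 2 + 3/4 * (W $ 1)\<^sup>2"
    unfolding A2 by (simp add: field_simps power2_eq_square)
  have "3 * A $ 4 - W $ 1 * (W $ 1 * A $ 2) - W $ 1 * W $ 2 = W $ 3 + A $ 2 * W $ 2 + A $ 3 * W $ 1"
    using nth_eq[of 4] A0 A1 W0 cos2 cos3 by (simp add: simps algebra_simps)
  then show "A $ 4 = W $ 3 / 3 + 5/6 * W $ 1 * W $ 2 + 7/12 * (W $ 1) ^ 3"
    unfolding A2 A3 by (simp add: field_simps power2_eq_square power3_eq_cube)
qed

lemma cos_subordination_coeffs:
  assumes f: "classA f" and f_nonzero: "\<forall>z\<in>ball 0 1 - {0}. f z \<noteq> 0"
    and w: "w holomorphic_on ball 0 1" "w 0 = 0" "w ` ball 0 1 \<subseteq> ball 0 1"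
    and quot: "\<forall>z\<in>ball 0 1. starlike_quot f z = (1 + w z) / cos (w z)"
  shows "coeff f 2 = coeff w 1"
    and "coeff f 3 = coeff w 2 / 2 + 3/4 * (coeff w 1)\<^sup>2"
    and "coeff f 4 = coeff w 3 / 3 + 5/6 * coeff w 1 * coeff w 2 + 7/12 * (coeff w 1) ^ 3"
proof -
  have f_holo: "f holomorphic_on ball 0 1" and f0: "f 0 = 0" and f'0: "deriv f 0 = 1"
    using f by (auto simp: classA_def)
  have identity: "cos (w z) * (z * deriv f z) = f z * (1 + w z)" if z: "z \<in> ball 0 1" for z
  proof (cases "z = 0")
    case False
    have "cos (w z) \<noteq> 0"
      using w(3) z by (intro cos_nonzero_on_unit_ball) blast
    moreover have "f z \<noteq> 0"
      using f_nonzero z False by simp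
    moreover have "z * deriv f z / f z = (1 + w z) / cos (w z)"
      using bspec[OF quot z] False by (simp add: starlike_quot_def)
    ultimately show ?thesis
      by (simp add: field_simps)
  qed (simp add: f0 w(2))
  define A where "A = fps_expansion f 0"
  define W where "W = fps_expansion w 0"
  have A: "f has_fps_expansion A"
    unfolding A_def using f_holo by (intro has_fps_expansion_fps_expansion) auto
  have W: "w has_fps_expansion W"
    unfolding W_def using w(1) by (intro has_fps_expansion_fps_expansion) auto
  have A0: "A $ 0 = 0" and A1: "A $ 1 = 1" and W0: "W $ 0 = 0"
    by (simp_all add: A_def W_def fps_expansion_def f0 f'0 w(2))
  have "eventually (\<lambda>z. z \<in> ball 0 1) (nhds (0::complex))"
    by (intro eventually_nhds_in_open) auto
  then have near_0: "eventually (\<lambda>z. cos (w z) * (z * deriv f z) = f z * (1 + w z)) (nhds 0)"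
    by (rule eventually_mono) (use identity in auto)
  have "(\<lambda>z. cos (w z) * (z * deriv f z)) has_fps_expansion (fps_cos 1 oo W) * (fps_X * fps_deriv A)"
    using has_fps_expansion_compose[OF has_fps_expansion_cos' W W0]
    by (auto simp: o_def intro!: has_fps_expansion_mult has_fps_expansion_deriv A has_fps_expansion_fps_X)
  then have "(\<lambda>z. f z * (1 + w z)) has_fps_expansion (fps_cos 1 oo W) * (fps_X * fps_deriv A)"
    using has_fps_expansion_cong[OF near_0 refl] by simp
  moreover have "(\<lambda>z. f z * (1 + w z)) has_fps_expansion A * (1 + W)"
    by (intro has_fps_expansion_mult has_fps_expansion_add A W has_fps_expansion_1)
  ultimately have "(fps_cos 1 oo W) * (fps_X * fps_deriv A) = A * (1 + W)"
    by (rule fps_expansion_unique_complex)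
  then show "coeff f 2 = coeff w 1"
    and "coeff f 3 = coeff w 2 / 2 + 3/4 * (coeff w 1)\<^sup>2"
    and "coeff f 4 = coeff w 3 / 3 + 5/6 * coeff w 1 * coeff w 2 + 7/12 * (coeff w 1) ^ 3"
    unfolding coeff_eq_fps_nth[OF A] coeff_eq_fps_nth[OF W] using A0 A1 W0
    by (rule cos_subordination_fps_coeffs)+
qed

lemma hankel_majorant_le:
  fixes x y z :: real
  assumes "0 \<le> x" "0 \<le> y" "0 \<le> z" and sq: "x\<^sup>2 + y\<^sup>2 + z\<^sup>2 \<le> 1"
  shows "x * z / 3 + x\<^sup>2 * y / 12 + x ^ 4 / 48 + y\<^sup>2 / 4 \<le> 1/4"
proof -
  have "x\<^sup>2 \<le> 1" "y\<^sup>2 \<le> 1"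
    using sq zero_le_power2[of x] zero_le_power2[of y] zero_le_power2[of z] by linarith+
  then have "x \<le> 1" "y \<le> 1"
    using assms(1,2) by (simp_all add: power_le_one_iff)
  then have "x\<^sup>2 * y \<le> x\<^sup>2" "x ^ 4 \<le> x\<^sup>2"
    using assms(1) by (simp_all add: mult_left_le power_decreasing)
  moreover have "16 * x * z \<le> 7 * x\<^sup>2 + 12 * z\<^sup>2"
  proof -
    have "0 \<le> 7 * (x - 8/7 * z)\<^sup>2 + 20/7 * z\<^sup>2" by simp
    then show ?thesis by (simp add: power2_eq_square algebra_simps)
  qed
  ultimately show ?thesis
    using sq by linarith
qed

lemma hankel_bound:
  fixes c1 c2 c3 :: complex
  assumes "(norm c1)\<^sup>2 + (norm c2)\<^sup>2 + (norm c3)\<^sup>2 \<le> 1"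
  shows "norm (c1 * (c3 / 3 + 5/6 * c1 * c2 + 7/12 * c1 ^ 3) - (c2 / 2 + 3/4 * c1\<^sup>2)\<^sup>2) \<le> 1/4"
proof -
  have "c1 * (c3 / 3 + 5/6 * c1 * c2 + 7/12 * c1 ^ 3) - (c2 / 2 + 3/4 * c1\<^sup>2)\<^sup>2
          = c1 * c3 / 3 + c1\<^sup>2 * c2 / 12 + c1 ^ 4 / 48 - c2\<^sup>2 / 4"
    by (simp add: field_simps power2_eq_square power3_eq_cube power4_eq_xxxx)
  also have "norm \<dots> \<le> norm (c1 * c3 / 3) + norm (c1\<^sup>2 * c2 / 12) + norm (c1 ^ 4 / 48) + norm (c2\<^sup>2 / 4)"
    using norm_triangle_ineq4[of "c1 * c3 / 3 + c1\<^sup>2 * c2 / 12 + c1 ^ 4 / 48" "c2\<^sup>2 / 4"]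
      norm_triangle_ineq[of "c1 * c3 / 3 + c1\<^sup>2 * c2 / 12" "c1 ^ 4 / 48"]
      norm_triangle_ineq[of "c1 * c3 / 3" "c1\<^sup>2 * c2 / 12"]
    by linarith
  also have "\<dots> = norm c1 * norm c3 / 3 + (norm c1)\<^sup>2 * norm c2 / 12 + (norm c1) ^ 4 / 48 + (norm c2)\<^sup>2 / 4"
    by (simp add: norm_mult norm_divide norm_power)
  also have "\<dots> \<le> 1/4"
    by (rule hankel_majorant_le) (use assms in auto)
  finally show ?thesis .
qed

lemma starlike_quot_prescribed:
  assumes holo: "p holomorphic_on ball 0 1" and p0: "p 0 = 1"
  obtains f where "classA f" "\<forall>z\<in>ball 0 1 - {0}. f z \<noteq> 0"
    "\<forall>z\<in>ball 0 1. starlike_quot f z = p z"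
proof -
  define q where "q = (\<lambda>z. if z = 0 then deriv p 0 else (p z - p 0) / (z - 0))"
  have "q holomorphic_on ball 0 1"
    unfolding q_def by (rule pole_lemma[OF holo]) simp
  then obtain G0 where G0: "\<And>z. z \<in> ball 0 1 \<Longrightarrow> (G0 has_field_derivative q z) (at z within ball 0 1)"
    using holomorphic_convex_primitive'[OF convex_ball open_ball] by metis
  define G where "G = (\<lambda>z. G0 z - G0 0)"
  have G_deriv: "(G has_field_derivative q z) (at z)" if "z \<in> ball 0 1" for z
    using G0[OF that] unfolding G_def at_within_open[OF that open_ball]
    by (auto intro!: derivative_eq_intros)
  define f where "f = (\<lambda>z. z * exp (G z))"
  have f_deriv: "(f has_field_derivative exp (G z) * p z) (at z)" if "z \<in> ball 0 1" for z
  proof -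
    have "(f has_field_derivative exp (G z) * (1 + z * q z)) (at z)"
      unfolding f_def using G_deriv[OF that]
      by (auto intro!: derivative_eq_intros simp: algebra_simps)
    moreover have "1 + z * q z = p z"
      using p0 by (simp add: q_def)
    ultimately show ?thesis by simp
  qed
  have "f holomorphic_on ball 0 1"
    using f_deriv holomorphic_on_open[OF open_ball] by blast
  moreover have "deriv f 0 = 1"
    using DERIV_imp_deriv[OF f_deriv[of 0]] p0 by (simp add: G_def)
  ultimately have "classA f"
    by (simp add: classA_def f_def)
  moreover have "starlike_quot f z = p z" if "z \<in> ball 0 1" for z
    using DERIV_imp_deriv[OF f_deriv[OF that]] p0 by (simp add: starlike_quot_def f_def)
  ultimately show ?thesis
    using that by (simp add: f_def)
qed

lemma Snc_hankel_le:
  assumes "Snc f"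
  shows "norm (coeff f 2 * coeff f 4 - (coeff f 3)\<^sup>2) \<le> 1/4"
proof -
  obtain w where w: "w holomorphic_on ball 0 1" "w 0 = 0" "w ` ball 0 1 \<subseteq> ball 0 1"
    and quot: "\<forall>z\<in>ball 0 1. starlike_quot f z = (1 + w z) / cos (w z)"
    using assms unfolding Snc_def subordinate_def by blast
  have "norm (w z) \<le> 1" if "z \<in> ball 0 1" for z
    using w(3) that by (simp add: image_subset_iff less_imp_le)
  then have "(\<Sum>k\<le>3. (norm (coeff w k))\<^sup>2) \<le> 1\<^sup>2"
    by (intro coeff_square_sum_le[OF w(1)])
  moreover have "coeff w 0 = 0"
    using w(2) by (simp add: coeff_def)
  ultimately have "(norm (coeff w 1))\<^sup>2 + (norm (coeff w 2))\<^sup>2 + (norm (coeff w 3))\<^sup>2 \<le> 1"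
    by (simp add: eval_nat_numeral)
  then have "norm (coeff w 1 * (coeff w 3 / 3 + 5/6 * coeff w 1 * coeff w 2 + 7/12 * (coeff w 1) ^ 3)
               - (coeff w 2 / 2 + 3/4 * (coeff w 1)\<^sup>2)\<^sup>2) \<le> 1/4"
    by (rule hankel_bound)
  moreover have f: "classA f" "\<forall>z\<in>ball 0 1 - {0}. f z \<noteq> 0"
    using assms by (simp_all add: Snc_def)
  ultimately show ?thesis
    by (simp only: cos_subordination_coeffs[OF f w quot])
qed

lemma Snc_hankel_extremal:
  obtains f where "Snc f" "norm (coeff f 2 * coeff f 4 - (coeff f 3)\<^sup>2) = 1/4"
proof -
  define w where "w = (\<lambda>z::complex. z\<^sup>2)"
  have w_ball: "w z \<in> ball 0 1" if "z \<in> ball 0 1" for z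
    using that by (simp add: w_def norm_power power_less_one_iff)
  have w: "w holomorphic_on ball 0 1" "w 0 = 0" "w ` ball 0 1 \<subseteq> ball 0 1"
    using w_ball by (auto simp: w_def intro: holomorphic_intros)
  have "(\<lambda>z. (1 + w z) / cos (w z)) holomorphic_on ball 0 1"
    using w(1) w_ball by (intro holomorphic_intros cos_nonzero_on_unit_ball) auto
  moreover have "(1 + w 0) / cos (w 0) = 1"
    using w(2) by simp
  ultimately obtain f where f: "classA f" "\<forall>z\<in>ball 0 1 - {0}. f z \<noteq> 0"
    and quot: "\<forall>z\<in>ball 0 1. starlike_quot f z = (1 + w z) / cos (w z)"
    by (rule starlike_quot_prescribed)
  have "Snc f"
    unfolding Snc_def subordinate_def using f w quot by (intro conjI exI[of _ w]) auto
  moreover have "coeff w k = (if k = 2 then 1 else 0)" for k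
    using coeff_eq_fps_nth[OF has_fps_expansion_fps_X_power[of 2]] by (simp add: w_def)
  then have "coeff f 2 * coeff f 4 - (coeff f 3)\<^sup>2 = -1/4"
    unfolding cos_subordination_coeffs[OF f w quot] by (simp add: power2_eq_square)
  ultimately show ?thesis
    using that by simp
qed

theorem mainTheorem5:
  shows "(\<forall>f. Snc f \<longrightarrow> norm (coeff f 2 * coeff f 4 - (coeff f 3)\<^sup>2) \<le> 1/4) \<and>
         (\<exists>f. Snc f \<and> norm (coeff f 2 * coeff f 4 - (coeff f 3)\<^sup>2) = 1/4)"
  using Snc_hankel_le Snc_hankel_extremal by blast

end
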